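(* Let $S$ be an $E$-demigroup, and let $E,E'\subseteq E(S)$ be right pre-reduced sets together with a bijection $E\to E'$, $e\mapsto e'$, such that $e\sim_r e'$ for all $e\in E$. Suppose $d(S)\subseteq E'$ and $d(e)=d(e')$ for all $e\in E$. Then $S$ is an $E'$-demigroup with respect to the same operation $d$, and the map $(e,s)\mapsto(e',e's)$ is an isomorphism of constellations from $C^d_E(S)$ onto $C^d_{E'}(S)$ (with inverse $(e',s)\mapsto(e,es)$). In particular, if $S$ is a left $E$-monoid then $C_E(S)\cong C_{E'}(S)$, and if $S$ is a left $E$-monoid with zero then $C^0_E(S)\cong C^0_{E'}(S)$.
   Context: For a semigroup $S$, $E(S)$ is its set of idempotents. For $e,f\in E(S)$, $e\le_r f$ iff $e=ef$, and $e\sim_r f$ iff $e\le_r f$ and $f\le_r e$. A subset $E\subseteq E(S)$ is right pre-reduced if $e=ef$ and $f=fe$ imply $e=f$ for all $e,f\in E$. A demigroup is a semigroup $S$ with a unary operation $d$ such that for all $x,y\in S$: $d(x)\in E(S)$, $d(x)x=x$ and $d(xy)=d(xd(y))$; $d(S)=\{d(s)\mid s\in S\}$. For $E\subseteq E(S)$, a demigroup $S$ is an $E$-demigroup if $d(s)\in E$ for all $s\in S$ and $ed(e)=e$ for all $e\in E$. $C_E(S)=\{(e,s)\in E\times S\mid es=s\}$ with partial product $(e,s)\circ(f,t)=(e,st)$ defined exactly when $sf=s$, and $D((e,s))=(e,e)$; $C^d_E(S)=\{(e,s)\in C_E(S)\mid d(e)=d(s)\}$ with the restricted operations (these are constellations).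 Let $S$ be a monoid with $1\in E\subseteq E(S)$. $S$ regarded as an $E$-demigroup via $d(s)=1$ for all $s$ is a left $E$-monoid; then $C^d_E(S)=C_E(S)$. If $S$ has a zero $0$, is integral ($st=0$ implies $s=0$ or $t=0$) and $0\in E$, then $S$ regarded as an $E$-demigroup via $d(0)=0$ and $d(s)=1$ for $s\neq0$ is a left $E$-monoid with zero; then $C^d_E(S)=C^0_E(S):=\{(e,s)\in C_E(S)\mid s=0\Rightarrow e=0\}$. An isomorphism of constellations $\rho:P\to Q$ is a bijection such that $\rho(D(s))=D(\rho(s))$ for all $s$, and $s\circ t$ exists iff $\rho(s)\circ\rho(t)$ exists, in which case $\rho(s\circ t)=\rho(s)\circ\rho(t)$. *)

theory Defs
  imports Main
begin

text \<open>The semigroup S is the whole type 'a of class semigroup_mult.\<close>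

definition idems :: "'a::semigroup_mult set" where
  "idems = {e. e * e = e}"

definition le_r :: "'a::semigroup_mult \<Rightarrow> 'a \<Rightarrow> bool" where
  "le_r e f \<longleftrightarrow> e = e * f"

definition sim_r :: "'a::semigroup_mult \<Rightarrow> 'a \<Rightarrow> bool" where
  "sim_r e f \<longleftrightarrow> le_r e f \<and> le_r f e"

definition right_pre_reduced :: "'a::semigroup_mult set \<Rightarrow> bool" where
  "right_pre_reduced E \<longleftrightarrow> (\<forall>e\<in>E. \<forall>f\<in>E. e = e * f \<and> f = f * e \<longrightarrow> e = f)"

definition demigroup :: "('a::semigroup_mult \<Rightarrow> 'a) \<Rightarrow> bool" where
  "demigroup d \<longleftrightarrow> (\<forall>x. d x \<in> idems \<and> d x * x = x) \<and> (\<forall>x y. d (x * y) = d (x * d y))"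

definition E_demigroup :: "'a::semigroup_mult set \<Rightarrow> ('a \<Rightarrow> 'a) \<Rightarrow> bool" where
  "E_demigroup E d \<longleftrightarrow> demigroup d \<and> (\<forall>s. d s \<in> E) \<and> (\<forall>e\<in>E. e * d e = e)"

definition CE :: "'a::semigroup_mult set \<Rightarrow> ('a \<times> 'a) set" where
  "CE E = {(e, s). e \<in> E \<and> e * s = s}"

definition CdE :: "'a::semigroup_mult set \<Rightarrow> ('a \<Rightarrow> 'a) \<Rightarrow> ('a \<times> 'a) set" where
  "CdE E d = {(e, s) \<in> CE E. d e = d s}"

definition C0E :: "'a::semigroup_mult \<Rightarrow> 'a set \<Rightarrow> ('a \<times> 'a) set" where
  "C0E z E = {(e, s) \<in> CE E. s = z \<longrightarrow> e = z}"

definition C_D :: "'a::semigroup_mult \<times> 'a \<Rightarrow> 'a \<times> 'a" where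
  "C_D x = (fst x, fst x)"

definition C_defined :: "'a::semigroup_mult \<times> 'a \<Rightarrow> 'a \<times> 'a \<Rightarrow> bool" where
  "C_defined x y \<longleftrightarrow> snd x * fst y = snd x"

definition C_prod :: "'a::semigroup_mult \<times> 'a \<Rightarrow> 'a \<times> 'a \<Rightarrow> 'a \<times> 'a" where
  "C_prod x y = (fst x, snd x * snd y)"

text \<open>Isomorphism of constellations (all constellations here are subsets of
  E x S with the restricted operations C_D, C_defined, C_prod).\<close>

definition constellation_iso :: "('a::semigroup_mult \<times> 'a) set \<Rightarrow> ('a \<times> 'a) set \<Rightarrow> ('a \<times> 'a \<Rightarrow> 'a \<times> 'a) \<Rightarrow> bool" where
  "constellation_iso P Q \<rho> \<longleftrightarrow> bij_betw \<rho> P Q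
     \<and> (\<forall>x\<in>P. \<rho> (C_D x) = C_D (\<rho> x))
     \<and> (\<forall>x\<in>P. \<forall>y\<in>P. (C_defined x y \<longleftrightarrow> C_defined (\<rho> x) (\<rho> y))
                      \<and> (C_defined x y \<longrightarrow> \<rho> (C_prod x y) = C_prod (\<rho> x) (\<rho> y)))"

definition is_identity :: "'a::semigroup_mult \<Rightarrow> bool" where
  "is_identity u \<longleftrightarrow> (\<forall>x. u * x = x \<and> x * u = x)"

definition is_zero :: "'a::semigroup_mult \<Rightarrow> bool" where
  "is_zero z \<longleftrightarrow> (\<forall>x. z * x = z \<and> x * z = z)"

definition integral_zero :: "'a::semigroup_mult \<Rightarrow> bool" where
  "integral_zero z \<longleftrightarrow> (\<forall>s t. s * t = z \<longrightarrow> s = z \<or> t = z)"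

end

theory Submission
  imports Defs
begin

text \<open>If \<open>e \<sim>\<^sub>r f\<close> then left multiplication by \<open>f\<close> and by \<open>e\<close> are mutually inverse on the
  elements fixed by \<open>e\<close> resp. \<open>f\<close>, and they respect the partial product of the constellations,
  because \<open>s e' = s\<close> and \<open>s f' = s\<close> are equivalent whenever \<open>e' \<sim>\<^sub>r f'\<close>. The domain
  condition \<open>d e = d s\<close> is transported using the demigroup law \<open>d (f s) = d (f d s)\<close>.\<close>

lemma sim_r_sym: "sim_r e f \<Longrightarrow> sim_r f e"
  by (simp add: sim_r_def)

lemma sim_r_idem:
  assumes "sim_r e f"
  shows "e * e = e"
proof -
  have ef: "e = e * f" and fe: "f = f * e" using assms by (simp_all add: sim_r_def le_r_def)
  have "e * e = e * (f * e)" using ef by (metis mult.assoc)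
  also have "\<dots> = e" using ef fe by metis
  finally show ?thesis .
qed

lemma le_r_absorb: "le_r e f \<Longrightarrow> e * s = s \<Longrightarrow> e * (f * s) = s"
  by (metis le_r_def mult.assoc)

lemma le_r_right_fixed: "le_r e f \<Longrightarrow> s * e = s \<Longrightarrow> s * f = s"
  by (metis le_r_def mult.assoc)

lemma demigroup_d_mult:
  assumes "demigroup d" and "f * d f = f" and "d s = d f"
  shows "d (f * s) = d f"
  using assms by (metis demigroup_def)

lemma CdE_sim_r_shift:
  assumes d: "demigroup d" and ef: "sim_r e f" and e_d: "e * d e = e" and def: "d e = d f"
    and "f \<in> F" and "(e, s) \<in> CdE E d"
  shows "(f, f * s) \<in> CdE F d"
proof -
  have s: "e * s = s" "d e = d s" using assms(6) by (auto simp: CdE_def CE_def)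
  have "f * d f = f * e * d e"
    using ef def by (metis sim_r_def le_r_def)
  also have "\<dots> = f" using e_d ef by (metis mult.assoc sim_r_def le_r_def)
  finally have "d (f * s) = d f"
    using demigroup_d_mult[OF d] s def by simp
  moreover have "f * (f * s) = f * s"
    using sim_r_idem[OF sim_r_sym[OF ef]] by (metis mult.assoc)
  ultimately show ?thesis using \<open>f \<in> F\<close> by (simp add: CdE_def CE_def)
qed

lemma constellation_iso_sim_r_shift:
  assumes sim: "\<forall>e\<in>E. sim_r e (\<phi> e)" and "P \<subseteq> CE E"
    and "bij_betw (\<lambda>(e, s). (\<phi> e, \<phi> e * s)) P Q"
  shows "constellation_iso P Q (\<lambda>(e, s). (\<phi> e, \<phi> e * s))"
  unfolding constellation_iso_def
proof (intro conjI ballI)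
  let ?\<rho> = "\<lambda>(e, s). (\<phi> e, \<phi> e * s)"
  fix x assume "x \<in> P"
  then obtain e s where "x = (e, s)" "e \<in> E" using \<open>P \<subseteq> CE E\<close> by (auto simp: CE_def)
  then show "?\<rho> (C_D x) = C_D (?\<rho> x)"
    using sim by (auto simp: C_D_def sim_r_def le_r_def)
next
  let ?\<rho> = "\<lambda>(e, s). (\<phi> e, \<phi> e * s)"
  fix x y assume "x \<in> P" "y \<in> P"
  then have "x \<in> CE E" "y \<in> CE E" using \<open>P \<subseteq> CE E\<close> by blast+
  then obtain e s f t where x: "x = (e, s)" "e \<in> E" "e * s = s" and y: "y = (f, t)" "f \<in> E"
    by (auto simp: CE_def)
  have ef: "sim_r e (\<phi> e)" and ff: "sim_r f (\<phi> f)" using sim x y by auto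
  have fixes_f: "s * f = s \<longleftrightarrow> s * \<phi> f = s"
    using le_r_right_fixed ff sim_r_def by metis
  have absorb: "e * (\<phi> e * s) = s" using le_r_absorb ef x(3) sim_r_def by metis
  have defined: "s * f = s \<longleftrightarrow> \<phi> e * s * \<phi> f = \<phi> e * s"
  proof
    assume "\<phi> e * s * \<phi> f = \<phi> e * s"
    then have "e * (\<phi> e * s) * \<phi> f = e * (\<phi> e * s)" by (metis mult.assoc)
    then show "s * f = s" using absorb fixes_f by simp
  qed (use fixes_f in \<open>simp add: mult.assoc\<close>)
  have product: "s * f = s \<Longrightarrow> \<phi> e * s * (\<phi> f * t) = \<phi> e * (s * t)"
    using fixes_f by (metis mult.assoc)
  show "C_defined x y \<longleftrightarrow> C_defined (?\<rho> x) (?\<rho> y)"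
    using x y defined by (simp add: C_defined_def)
  show "C_defined x y \<longrightarrow> ?\<rho> (C_prod x y) = C_prod (?\<rho> x) (?\<rho> y)"
    using x y product by (auto simp: C_defined_def C_prod_def)
qed (use assms in simp)

lemma sim_r_identity: "is_identity u \<Longrightarrow> sim_r u f \<Longrightarrow> f = u"
  by (simp add: sim_r_def le_r_def is_identity_def)

lemma sim_r_zero: "is_zero z \<Longrightarrow> sim_r z f \<Longrightarrow> f = z"
  by (metis sim_r_def le_r_def is_zero_def)

lemma E_demigroup_const_identity:
  "is_identity u \<Longrightarrow> u \<in> E \<Longrightarrow> E_demigroup E (\<lambda>_. u)"
  by (simp add: E_demigroup_def demigroup_def idems_def is_identity_def)

lemma CdE_subset_CE: "CdE F d \<subseteq> CE F"
  by (auto simp: CdE_def)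

lemma CdE_const: "CdE F (\<lambda>_. u) = CE F"
  by (auto simp: CdE_def)

lemma E_demigroup_identity_zero:
  assumes "is_identity u" and "is_zero z" and "integral_zero z" and "u \<in> E" and "z \<in> E"
  shows "E_demigroup E (\<lambda>x. if x = z then z else u)"
  using assms
  by (auto simp: E_demigroup_def demigroup_def idems_def is_identity_def is_zero_def
      integral_zero_def)

lemma CdE_identity_zero:
  assumes u: "is_identity u" and z: "is_zero z"
  shows "CdE F (\<lambda>x. if x = z then z else u) = C0E z F"
proof (cases "u = z")
  case True
  then have "\<And>a b. (if a = z then z else u) = (if b = z then z else u) \<and> a = b"
    using u z by (metis (mono_tags) is_identity_def is_zero_def)
  then show ?thesis unfolding CdE_def C0E_def by auto
next
  case False
  then show ?thesis unfolding CdE_def C0E_def CE_def using z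
    by (auto simp: is_zero_def split: if_splits)
qed

locale sim_r_bijection =
  fixes E E' :: "'a::semigroup_mult set" and \<phi> :: "'a \<Rightarrow> 'a"
  assumes bij: "bij_betw \<phi> E E'"
    and sim: "\<forall>e\<in>E. sim_r e (\<phi> e)"
begin

abbreviation \<psi> :: "'a \<Rightarrow> 'a" where "\<psi> \<equiv> the_inv_into E \<phi>"

definition shift :: "'a \<times> 'a \<Rightarrow> 'a \<times> 'a" where
  "shift = (\<lambda>(e, s). (\<phi> e, \<phi> e * s))"

definition unshift :: "'a \<times> 'a \<Rightarrow> 'a \<times> 'a" where
  "unshift = (\<lambda>(e', s). (\<psi> e', \<psi> e' * s))"

lemma \<phi>_in: "e \<in> E \<Longrightarrow> \<phi> e \<in> E'"
  using bij by (auto simp: bij_betw_def)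

lemma \<psi>_in: "e' \<in> E' \<Longrightarrow> \<psi> e' \<in> E"
  using bij by (metis bij_betw_def the_inv_into_into order_refl)

lemma \<phi>_\<psi>: "e' \<in> E' \<Longrightarrow> \<phi> (\<psi> e') = e'"
  using bij by (metis bij_betw_def f_the_inv_into_f)

lemma \<psi>_\<phi>: "e \<in> E \<Longrightarrow> \<psi> (\<phi> e) = e"
  using bij by (simp add: bij_betw_def the_inv_into_f_f)

lemma sim_\<psi>: "e' \<in> E' \<Longrightarrow> sim_r e' (\<psi> e')"
  using sim \<psi>_in \<phi>_\<psi> sim_r_sym by metis

lemma \<phi>_eq_iff: "e \<in> E \<Longrightarrow> f \<in> E \<Longrightarrow> \<phi> e = \<phi> f \<longleftrightarrow> e = f"
  using \<psi>_\<phi> by metis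

lemma unshift_shift:
  assumes "x \<in> CE E"
  shows "unshift (shift x) = x"
proof -
  obtain e s where x: "x = (e, s)" "e \<in> E" "e * s = s" using assms by (auto simp: CE_def)
  then have "le_r e (\<phi> e)" using sim by (simp add: sim_r_def)
  then show ?thesis using x \<psi>_\<phi> le_r_absorb by (simp add: shift_def unshift_def)
qed

lemma shift_unshift:
  assumes "y \<in> CE E'"
  shows "shift (unshift y) = y"
proof -
  obtain e' s where y: "y = (e', s)" "e' \<in> E'" "e' * s = s" using assms by (auto simp: CE_def)
  then have "le_r e' (\<psi> e')" using sim_\<psi> by (simp add: sim_r_def)
  then show ?thesis using y \<phi>_\<psi> le_r_absorb by (simp add: shift_def unshift_def)
qed

context
  fixes d :: "'a \<Rightarrow> 'a"
  assumes E_dg: "E_demigroup E d" and d_in_E': "\<forall>s. d s \<in> E'"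
    and d_\<phi>: "\<forall>e\<in>E. d e = d (\<phi> e)"
begin

lemma E'_demigroup: "E_demigroup E' d"
  unfolding E_demigroup_def
proof (intro conjI ballI)
  fix e' assume "e' \<in> E'"
  then obtain e where e: "e \<in> E" "e' = \<phi> e" using bij by (auto simp: bij_betw_def)
  have "\<phi> e * d (\<phi> e) = \<phi> e * e * d e" using e sim d_\<phi> by (metis sim_r_def le_r_def)
  also have "\<dots> = \<phi> e"
    using e E_dg sim by (metis E_demigroup_def mult.assoc sim_r_def le_r_def)
  finally show "e' * d e' = e'" using e by simp
qed (use E_dg d_in_E' in \<open>simp_all add: E_demigroup_def\<close>)

lemma shift_in_CdE:
  assumes "x \<in> CdE E d"
  shows "shift x \<in> CdE E' d"
proof -
  obtain e s where x: "x = (e, s)" "e \<in> E" using assms by (auto simp: CdE_def CE_def)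
  have "(\<phi> e, \<phi> e * s) \<in> CdE E' d"
    by (rule CdE_sim_r_shift[where E = E])
      (use E_dg sim d_\<phi> \<phi>_in x assms in \<open>auto simp: E_demigroup_def\<close>)
  then show ?thesis using x by (simp add: shift_def)
qed

lemma unshift_in_CdE:
  assumes "y \<in> CdE E' d"
  shows "unshift y \<in> CdE E d"
proof -
  obtain e' s where y: "y = (e', s)" "e' \<in> E'" using assms by (auto simp: CdE_def CE_def)
  have "d e' = d (\<psi> e')" using d_\<phi> \<psi>_in \<phi>_\<psi> y(2) by metis
  then have "(\<psi> e', \<psi> e' * s) \<in> CdE E d"
    by (intro CdE_sim_r_shift[where E = E'])
      (use E'_demigroup sim_\<psi> \<psi>_in y assms in \<open>auto simp: E_demigroup_def\<close>)
  then show ?thesis using y by (simp add: unshift_def)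
qed

lemma constellation_iso_shift: "constellation_iso (CdE E d) (CdE E' d) shift"
proof -
  have "bij_betw shift (CdE E d) (CdE E' d)"
    by (rule bij_betw_byWitness[where f' = unshift])
      (use shift_in_CdE unshift_in_CdE unshift_shift shift_unshift CdE_subset_CE in blast)+
  then show ?thesis
    unfolding shift_def using sim CdE_subset_CE by (intro constellation_iso_sim_r_shift)
qed

end

lemma constellation_iso_CE:
  assumes "is_identity u" and "u \<in> E"
  shows "constellation_iso (CE E) (CE E') shift"
proof -
  have "\<phi> u = u" using assms sim sim_r_identity by metis
  then have "u \<in> E'" using \<phi>_in assms(2) by metis
  then show ?thesis
    using constellation_iso_shift[OF E_demigroup_const_identity[OF assms]]
    by (simp add: CdE_const)
qed

lemma constellation_iso_C0E:
  assumes u: "is_identity u" and z: "is_zero z" and "integral_zero z" and "u \<in> E" and "z \<in> E"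
  shows "constellation_iso (C0E z E) (C0E z E') shift"
proof -
  define d where "d = (\<lambda>x. if x = z then z else u)"
  have "\<phi> u = u" using assms sim sim_r_identity by metis
  moreover have "\<phi> z = z" using assms sim sim_r_zero by metis
  ultimately
  have "\<forall>s. d s \<in> E'" and "\<forall>e\<in>E. d e = d (\<phi> e)"
    using \<phi>_in \<phi>_eq_iff assms by (auto simp: d_def) metis+
  then show ?thesis
    using constellation_iso_shift[OF E_demigroup_identity_zero[OF assms]]
    by (simp add: d_def CdE_identity_zero[OF u z])
qed

end

theorem proposition3p4:
  fixes E E' :: "'a::semigroup_mult set" and \<phi> :: "'a \<Rightarrow> 'a"
  assumes "E \<subseteq> idems" and "E' \<subseteq> idems"
    and "right_pre_reduced E" and "right_pre_reduced E'"
    and "bij_betw \<phi> E E'"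
    and "\<forall>e\<in>E. sim_r e (\<phi> e)"
  shows
    "(\<forall>d :: 'a \<Rightarrow> 'a.
        E_demigroup E d \<and> (\<forall>s. d s \<in> E') \<and> (\<forall>e\<in>E. d e = d (\<phi> e)) \<longrightarrow>
          E_demigroup E' d
        \<and> constellation_iso (CdE E d) (CdE E' d) (\<lambda>(e, s). (\<phi> e, \<phi> e * s))
        \<and> (\<forall>x\<in>CdE E d. (\<lambda>(e', s). (the_inv_into E \<phi> e', the_inv_into E \<phi> e' * s))
                             ((\<lambda>(e, s). (\<phi> e, \<phi> e * s)) x) = x)
        \<and> (\<forall>y\<in>CdE E' d. (\<lambda>(e, s). (\<phi> e, \<phi> e * s))
                             ((\<lambda>(e', s). (the_inv_into E \<phi> e', the_inv_into E \<phi> e' * s)) y) = y))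
     \<and> (\<forall>u :: 'a. is_identity u \<and> u \<in> E \<longrightarrow> (\<exists>\<rho>. constellation_iso (CE E) (CE E') \<rho>))
     \<and> (\<forall>u z :: 'a. is_identity u \<and> is_zero z \<and> integral_zero z \<and> u \<in> E \<and> z \<in> E \<longrightarrow>
          (\<exists>\<rho>. constellation_iso (C0E z E) (C0E z E') \<rho>))"
proof -
  interpret sim_r_bijection E E' \<phi> using assms(5,6) by unfold_locales
  show ?thesis
    using CdE_subset_CE E'_demigroup constellation_iso_shift unshift_shift shift_unshift
      constellation_iso_CE constellation_iso_C0E
    unfolding shift_def unshift_def by blast
qed

end
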